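(* Let $q$ be a prime power, $n\ge 1$, and $t$ transcendental over $\mathbb{F}_q$. Let $L(x)\in\mathbb{F}_q[x]$ be a monic $q$-polynomial of $q$-degree $n$. Then $(L(x)+tx)/x$ is irreducible over $\mathbb{F}_q(t)$; consequently $q^n-1$ divides the order of the Galois group of $L(x)+tx$ over $\mathbb{F}_q(t)$.
   Context: A $q$-polynomial over a field $F\supseteq\mathbb{F}_q$ is a polynomial of the form $a_0x+a_1x^q+\cdots+a_nx^{q^n}\in F[x]$; if $a_n\neq 0$ its $q$-degree is $n$. *)

theory Defs
  imports "HOL-Computational_Algebra.Computational_Algebra"
begin

definition q_poly :: "nat \<Rightarrow> nat \<Rightarrow> (nat \<Rightarrow> 'a::field) \<Rightarrow> 'a poly" where
  "q_poly q n a = (\<Sum>i\<le>n. monom (a i) (q ^ i))"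

definition tvar :: "'a::field poly fract" where
  "tvar = to_fract [:0, 1:]"

definition lift_Ft :: "'a::field poly \<Rightarrow> 'a poly fract poly" where
  "lift_Ft p = map_poly (\<lambda>c. to_fract [:c:]) p"

definition field_embedding :: "('a::field \<Rightarrow> 'c::field) \<Rightarrow> bool" where
  "field_embedding \<phi> \<longleftrightarrow> inj \<phi> \<and> \<phi> 1 = 1 \<and>
     (\<forall>x y. \<phi> (x + y) = \<phi> x + \<phi> y) \<and> (\<forall>x y. \<phi> (x * y) = \<phi> x * \<phi> y)"

definition splits :: "'c::field poly \<Rightarrow> bool" where
  "splits p \<longleftrightarrow> (\<exists>c rs. p = smult c (\<Prod>r\<leftarrow>rs. [:- r, 1:]))"

definition is_subfield :: "'c::field set \<Rightarrow> bool" where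
  "is_subfield S \<longleftrightarrow> 0 \<in> S \<and> 1 \<in> S \<and>
     (\<forall>x\<in>S. \<forall>y\<in>S. x + y \<in> S \<and> x * y \<in> S) \<and>
     (\<forall>x\<in>S. - x \<in> S \<and> inverse x \<in> S)"

definition gen_subfield :: "'c::field set \<Rightarrow> 'c set" where
  "gen_subfield A = \<Inter>{S. A \<subseteq> S \<and> is_subfield S}"

definition splitting_field_in :: "('a::field \<Rightarrow> 'c::field) \<Rightarrow> 'a poly \<Rightarrow> 'c set" where
  "splitting_field_in \<phi> f = gen_subfield (range \<phi> \<union> {x. poly (map_poly \<phi> f) x = 0})"

definition galois_group :: "('a::field \<Rightarrow> 'c::field) \<Rightarrow> 'a poly \<Rightarrow> ('c \<Rightarrow> 'c) set" where
  "galois_group \<phi> f = (let K = splitting_field_in \<phi> f in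
     {\<sigma>. bij_betw \<sigma> K K \<and>
          (\<forall>x\<in>K. \<forall>y\<in>K. \<sigma> (x + y) = \<sigma> x + \<sigma> y \<and> \<sigma> (x * y) = \<sigma> x * \<sigma> y) \<and>
          (\<forall>a. \<sigma> (\<phi> a) = \<phi> a) \<and> (\<forall>x. x \<notin> K \<longrightarrow> \<sigma> x = x)})"

end

theory Submission
  imports Defs "Subresultants.More_Homomorphisms"
begin

text \<open>Write \<open>L(x) + t x = x g\<close> with \<open>g = L(x)/x + t\<close>. Read in \<open>F[x][t]\<close>, \<open>g\<close> is monic of degree one
  in \<open>t\<close>, which makes it irreducible over \<open>F(t)\<close>. The derivative of \<open>L(x) + t x\<close> is the nonzero
  constant \<open>a\<^sub>0 + t\<close>, so all roots are simple and \<open>g\<close> has \<open>deg g = q\<^sup>n - 1\<close> distinct roots.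
  Extending the isomorphism \<open>F(t)(\<alpha>) \<cong> F(t)(\<beta>)\<close> between any two roots of \<open>g\<close> to the splitting field
  shows that these roots form one orbit of the Galois group, and the orbit-stabiliser count
  gives \<open>q\<^sup>n - 1\<close> dividing the group order.\<close>

section \<open>Subfields and polynomials with coefficients in a subfield\<close>

definition poly_over :: "'c::field set \<Rightarrow> 'c poly \<Rightarrow> bool" where
  "poly_over E p \<longleftrightarrow> (\<forall>i. coeff p i \<in> E)"

definition hom_on :: "'c::field set \<Rightarrow> ('c \<Rightarrow> 'c) \<Rightarrow> bool" where
  "hom_on E \<tau> \<longleftrightarrow> \<tau> 1 = 1 \<and> (\<forall>x\<in>E. \<forall>y\<in>E. \<tau> (x + y) = \<tau> x + \<tau> y \<and> \<tau> (x * y) = \<tau> x * \<tau> y)"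

lemma poly_over_mono: "poly_over E p \<Longrightarrow> E \<subseteq> T \<Longrightarrow> poly_over T p"
  by (auto simp: poly_over_def)

lemma hom_on_id: "hom_on E (\<lambda>x. x)"
  by (simp add: hom_on_def)

lemma map_poly_const: "f 0 = 0 \<Longrightarrow> map_poly f [:c:] = [:f c:]"
  by (rule poly_eqI) (simp add: coeff_map_poly coeff_pCons split: nat.splits)

lemma map_poly_fixed:
  assumes "poly_over k p" "\<forall>x\<in>k. \<tau> x = x"
  shows "map_poly \<tau> p = p"
proof -
  have "0 \<in> k" using assms(1) coeff_eq_0[of p "Suc (degree p)"] unfolding poly_over_def by (metis lessI)
  then show ?thesis using assms by (intro poly_eqI) (simp add: coeff_map_poly poly_over_def)
qed

locale type_subfield =
  fixes E :: "'c::field set"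
  assumes subfield: "is_subfield E"
begin

lemma zero_closed [simp]: "0 \<in> E" and one_closed [simp]: "1 \<in> E"
  using subfield unfolding is_subfield_def by auto

lemma add_closed [simp]: "x \<in> E \<Longrightarrow> y \<in> E \<Longrightarrow> x + y \<in> E"
  and mult_closed [simp]: "x \<in> E \<Longrightarrow> y \<in> E \<Longrightarrow> x * y \<in> E"
  and uminus_closed [simp]: "x \<in> E \<Longrightarrow> - x \<in> E"
  and inverse_closed [simp]: "x \<in> E \<Longrightarrow> inverse x \<in> E"
  using subfield unfolding is_subfield_def by auto

lemma diff_closed [simp]: "x \<in> E \<Longrightarrow> y \<in> E \<Longrightarrow> x - y \<in> E"
  using add_closed[of x "- y"] by simp

lemma sum_closed: "(\<And>i. i \<in> A \<Longrightarrow> f i \<in> E) \<Longrightarrow> sum f A \<in> E"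
  by (induction A rule: infinite_finite_induct) auto

lemma power_closed [simp]: "x \<in> E \<Longrightarrow> x ^ n \<in> E"
  by (induction n) auto

lemma poly_over_0 [simp]: "poly_over E 0" and poly_over_1 [simp]: "poly_over E 1"
  by (auto simp: poly_over_def coeff_1)

lemma poly_over_pCons [simp]: "poly_over E (pCons c p) \<longleftrightarrow> c \<in> E \<and> poly_over E p"
  by (auto simp: poly_over_def coeff_pCons split: nat.splits)

lemma poly_over_add [simp]: "poly_over E p \<Longrightarrow> poly_over E q \<Longrightarrow> poly_over E (p + q)"
  and poly_over_diff [simp]: "poly_over E p \<Longrightarrow> poly_over E q \<Longrightarrow> poly_over E (p - q)"
  and poly_over_uminus [simp]: "poly_over E p \<Longrightarrow> poly_over E (- p)"
  by (auto simp: poly_over_def)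

lemma poly_over_mult [simp]: "poly_over E p \<Longrightarrow> poly_over E q \<Longrightarrow> poly_over E (p * q)"
  unfolding poly_over_def coeff_mult by (auto intro!: sum_closed)

lemma poly_over_smult [simp]: "c \<in> E \<Longrightarrow> poly_over E p \<Longrightarrow> poly_over E (Polynomial.smult c p)"
  by (auto simp: poly_over_def)

lemma poly_over_monom [simp]: "c \<in> E \<Longrightarrow> poly_over E (monom c n)"
  by (auto simp: poly_over_def coeff_monom)

lemma poly_closed: "poly_over E p \<Longrightarrow> x \<in> E \<Longrightarrow> poly p x \<in> E"
  unfolding poly_altdef poly_over_def by (auto intro!: sum_closed)

lemma lead_coeff_closed: "poly_over E p \<Longrightarrow> lead_coeff p \<in> E"
  by (auto simp: poly_over_def)

lemma poly_over_division:
  assumes "poly_over E p" "poly_over E m" "m \<noteq> 0"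
  shows "\<exists>q r. poly_over E q \<and> poly_over E r \<and> p = q * m + r \<and> (r = 0 \<or> degree r < degree m)"
  using assms(1)
proof (induction "degree p" arbitrary: p rule: less_induct)
  case (less p)
  show ?case
  proof (cases "p = 0 \<or> degree p < degree m")
    case True
    then show ?thesis using less.prems by (intro exI[of _ 0] exI[of _ p]) auto
  next
    case False
    then have p0: "p \<noteq> 0" and dm: "degree m \<le> degree p" by auto
    define s where "s = monom (lead_coeff p / lead_coeff m) (degree p - degree m)"
    have s: "poly_over E s"
      unfolding s_def using lead_coeff_closed less.prems assms(2) by (simp add: divide_inverse)
    have ds: "degree (s * m) = degree p"
      using p0 assms(3) dm by (simp add: s_def degree_mult_eq degree_monom_eq)
    have ls: "lead_coeff (s * m) = lead_coeff p"
      using p0 assms(3) dm by (simp only: lead_coeff_mult) (simp add: s_def degree_monom_eq)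
    define p' where "p' = p - s * m"
    have p': "poly_over E p'" unfolding p'_def using s less.prems assms(2) by simp
    have "p' = 0 \<or> degree p' < degree p"
    proof (cases "p' = 0")
      case False
      have "degree p' \<le> degree p" unfolding p'_def using ds by (metis degree_diff_le order_refl)
      moreover have "coeff p' (degree p) = 0" unfolding p'_def using ls ds by simp
      ultimately show ?thesis using False degree_less_if_less_eqI by blast
    qed simp
    then show ?thesis
    proof
      assume "p' = 0"
      then show ?thesis using s by (intro exI[of _ s] exI[of _ 0]) (auto simp: p'_def)
    next
      assume "degree p' < degree p"
      from less.hyps[OF this p'] obtain q r where
        "poly_over E q" "poly_over E r" "p' = q * m + r" "r = 0 \<or> degree r < degree m" by blast
      then show ?thesis using s
        by (intro exI[of _ "q + s"] exI[of _ r]) (auto simp: p'_def algebra_simps)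
    qed
  qed
qed

end

locale type_subfield_hom = type_subfield E for E :: "'c::field set" +
  fixes \<tau> :: "'c \<Rightarrow> 'c"
  assumes hom_on: "hom_on E \<tau>"
begin

lemma hom_one [simp]: "\<tau> 1 = 1"
  using hom_on by (simp add: hom_on_def)

lemma hom_add: "x \<in> E \<Longrightarrow> y \<in> E \<Longrightarrow> \<tau> (x + y) = \<tau> x + \<tau> y"
  and hom_mult: "x \<in> E \<Longrightarrow> y \<in> E \<Longrightarrow> \<tau> (x * y) = \<tau> x * \<tau> y"
  using hom_on by (simp_all add: hom_on_def)

lemma hom_zero [simp]: "\<tau> 0 = 0"
proof -
  have "\<tau> 0 + \<tau> 0 = \<tau> 0 + 0" using hom_add[of 0 0] by simp
  then show ?thesis by (simp only: add_left_cancel)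
qed

lemma hom_uminus: "x \<in> E \<Longrightarrow> \<tau> (- x) = - \<tau> x"
  using hom_add[of x "- x"] by (simp add: add_eq_0_iff)

lemma hom_diff: "x \<in> E \<Longrightarrow> y \<in> E \<Longrightarrow> \<tau> (x - y) = \<tau> x - \<tau> y"
  using hom_add[of x "- y"] hom_uminus[of y] by simp

lemma hom_inverse: "x \<in> E \<Longrightarrow> \<tau> (inverse x) = inverse (\<tau> x)"
  using hom_mult[of x "inverse x"] by (cases "x = 0") (auto intro: inverse_unique[symmetric])

lemma inj_on_hom: "inj_on \<tau> E"
proof (rule inj_onI)
  fix x y assume xy: "x \<in> E" "y \<in> E" "\<tau> x = \<tau> y"
  then have "\<tau> (x - y) * \<tau> (inverse (x - y)) = 0" by (simp add: hom_diff)
  then show "x = y" using xy hom_mult[of "x - y" "inverse (x - y)"] by (cases "x = y") auto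
qed

lemma hom_sum: "(\<And>i. i \<in> A \<Longrightarrow> f i \<in> E) \<Longrightarrow> \<tau> (sum f A) = (\<Sum>i\<in>A. \<tau> (f i))"
  by (induction A rule: infinite_finite_induct) (auto simp: hom_add sum_closed)

lemma hom_power: "x \<in> E \<Longrightarrow> \<tau> (x ^ n) = \<tau> x ^ n"
  by (induction n) (auto simp: hom_mult)

lemma map_poly_add: "poly_over E p \<Longrightarrow> poly_over E q \<Longrightarrow> map_poly \<tau> (p + q) = map_poly \<tau> p + map_poly \<tau> q"
  by (rule poly_eqI) (auto simp: poly_over_def coeff_map_poly hom_add)

lemma map_poly_diff: "poly_over E p \<Longrightarrow> poly_over E q \<Longrightarrow> map_poly \<tau> (p - q) = map_poly \<tau> p - map_poly \<tau> q"
  by (rule poly_eqI) (auto simp: poly_over_def coeff_map_poly hom_diff)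

lemma map_poly_mult: "poly_over E p \<Longrightarrow> poly_over E q \<Longrightarrow> map_poly \<tau> (p * q) = map_poly \<tau> p * map_poly \<tau> q"
  by (rule poly_eqI) (auto simp: poly_over_def coeff_map_poly coeff_mult hom_sum hom_mult)

lemma poly_map_poly_hom: "poly_over E p \<Longrightarrow> x \<in> E \<Longrightarrow> poly (map_poly \<tau> p) (\<tau> x) = \<tau> (poly p x)"
proof -
  assume p: "poly_over E p" and x: "x \<in> E"
  have "poly (map_poly \<tau> p) (\<tau> x) = (\<Sum>i\<le>degree p. \<tau> (coeff p i) * \<tau> x ^ i)"
  proof -
    have "map_poly \<tau> p = (\<Sum>i\<le>degree p. monom (coeff (map_poly \<tau> p) i) i)"
      by (rule poly_as_sum_of_monoms'[symmetric]) (rule degree_map_poly_le)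
    then show ?thesis by (simp add: poly_sum poly_monom coeff_map_poly)
  qed
  also have "\<dots> = \<tau> (poly p x)"
    using p x by (simp add: poly_altdef poly_over_def hom_sum hom_mult hom_power)
  finally show ?thesis .
qed

lemma subfield_image: "is_subfield (\<tau> ` E)"
  unfolding is_subfield_def
proof (intro conjI ballI)
  show "0 \<in> \<tau> ` E" "1 \<in> \<tau> ` E" using hom_zero hom_one zero_closed one_closed by (metis image_eqI)+
  fix x y assume "x \<in> \<tau> ` E" "y \<in> \<tau> ` E"
  then obtain a b where ab: "a \<in> E" "b \<in> E" "x = \<tau> a" "y = \<tau> b" by blast
  show "x + y \<in> \<tau> ` E" "x * y \<in> \<tau> ` E"
    using ab hom_add[OF ab(1,2)] hom_mult[OF ab(1,2)] by (metis image_eqI add_closed mult_closed)+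
next
  fix x assume "x \<in> \<tau> ` E"
  then obtain a where a: "a \<in> E" "x = \<tau> a" by blast
  show "- x \<in> \<tau> ` E" "inverse x \<in> \<tau> ` E"
    using a hom_uminus[OF a(1)] hom_inverse[OF a(1)] by (metis image_eqI uminus_closed inverse_closed)+
qed

lemma subfield_preimage:
  assumes T: "is_subfield T"
  shows "is_subfield {x\<in>E. \<tau> x \<in> T}"
proof -
  interpret T: type_subfield T by (rule type_subfield.intro) (fact T)
  show ?thesis
    unfolding is_subfield_def by (auto simp: hom_add hom_mult hom_uminus hom_inverse)
qed

end

section \<open>Simple extensions and extension of homomorphisms\<close>

definition is_minpoly :: "'c::field set \<Rightarrow> 'c \<Rightarrow> 'c poly \<Rightarrow> bool" where
  "is_minpoly E \<gamma> m \<longleftrightarrow> poly_over E m \<and> lead_coeff m = 1 \<and> poly m \<gamma> = 0 \<and>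
     (\<forall>p. poly_over E p \<and> poly p \<gamma> = 0 \<longrightarrow> (\<exists>h. poly_over E h \<and> p = m * h))"

definition adjoin :: "'c::field set \<Rightarrow> 'c \<Rightarrow> 'c set" where
  "adjoin E \<gamma> = (\<lambda>p. poly p \<gamma>) ` {p. poly_over E p}"

lemma minpoly_degree_pos:
  assumes "is_minpoly E \<gamma> m"
  shows "degree m > 0"
proof (rule ccontr)
  assume "\<not> degree m > 0"
  then obtain c where m: "m = [:c:]" by (auto elim: degree_eq_zeroE)
  then show False using assms unfolding is_minpoly_def by auto
qed

context type_subfield
begin

lemma minpoly_degree_le:
  assumes "is_minpoly E \<gamma> m" "poly_over E p" "p \<noteq> 0" "poly p \<gamma> = 0"
  shows "degree m \<le> degree p"
proof -
  obtain h where "p = m * h" using assms unfolding is_minpoly_def by blast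
  then show ?thesis using assms(3) by (simp add: degree_mult_eq)
qed

lemma minpoly_exists:
  assumes "poly_over E F" "F \<noteq> 0" "poly F \<gamma> = 0"
  obtains m where "is_minpoly E \<gamma> m"
proof -
  define S where "S = {p. poly_over E p \<and> p \<noteq> 0 \<and> poly p \<gamma> = 0}"
  have "F \<in> S" using assms by (simp add: S_def)
  then obtain m0 where m0: "m0 \<in> S" and least: "\<And>p. p \<in> S \<Longrightarrow> degree m0 \<le> degree p"
    using ex_has_least_nat[of "\<lambda>p. p \<in> S" F degree] by blast
  define m where "m = Polynomial.smult (inverse (lead_coeff m0)) m0"
  have m: "poly_over E m" "lead_coeff m = 1" "poly m \<gamma> = 0" "degree m = degree m0"
    using m0 lead_coeff_closed by (auto simp: S_def m_def)
  have "\<exists>h. poly_over E h \<and> p = m * h" if p: "poly_over E p" "poly p \<gamma> = 0" for p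
  proof -
    have "m \<noteq> 0" using m(2) by auto
    from poly_over_division[OF p(1) m(1) this] obtain q r where
      qr: "poly_over E q" "poly_over E r" "p = q * m + r" "r = 0 \<or> degree r < degree m" by blast
    have "poly r \<gamma> = 0" using qr(3) p(2) m(3) by (simp add: algebra_simps)
    have "r = 0"
    proof (rule ccontr)
      assume "r \<noteq> 0"
      then show False using least[of r] qr(2,4) m(4) \<open>poly r \<gamma> = 0\<close> by (simp add: S_def)
    qed
    then show ?thesis using qr by (auto simp: mult.commute)
  qed
  then show ?thesis using that m unfolding is_minpoly_def by blast
qed

lemma poly_over_bezout:
  assumes p: "poly_over E p" and m: "poly_over E m" "m \<noteq> 0"
  obtains u v w where "poly_over E u" "poly_over E w" "w = u * p + v * m" "w \<noteq> 0"
    "\<exists>Q. poly_over E Q \<and> p = Q * w" "\<exists>Q. poly_over E Q \<and> m = Q * w"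
proof -
  define I where "I = {w. \<exists>u v. poly_over E u \<and> poly_over E v \<and> w = u * p + v * m \<and> w \<noteq> 0}"
  have "m \<in> I" unfolding I_def using m by (intro CollectI exI[of _ 0] exI[of _ 1]) auto
  then obtain w where w: "w \<in> I" and least: "\<And>w'. w' \<in> I \<Longrightarrow> degree w \<le> degree w'"
    using ex_has_least_nat[of "\<lambda>w. w \<in> I" m degree] by blast
  from w obtain u v where uv: "poly_over E u" "poly_over E v" "w = u * p + v * m" "w \<noteq> 0"
    unfolding I_def by blast
  have divides: "\<exists>Q. poly_over E Q \<and> z = Q * w"
    if uv': "poly_over E u'" "poly_over E v'" "z = u' * p + v' * m" for z u' v'
  proof -
    have "poly_over E z" "poly_over E w" using uv uv' p m by simp_all
    from poly_over_division[OF this uv(4)] obtain Q r where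
      Qr: "poly_over E Q" "poly_over E r" "z = Q * w + r" "r = 0 \<or> degree r < degree w" by blast
    have "r = (u' - Q * u) * p + (v' - Q * v) * m" using Qr(3) uv'(3) uv(3) by (simp add: algebra_simps)
    then have "r \<notin> I \<longrightarrow> r = 0" using uv' uv Qr unfolding I_def by auto
    then have "r = 0" using least[of r] Qr(4) by (cases "r \<in> I") auto
    then show ?thesis using Qr by auto
  qed
  have "\<exists>Q. poly_over E Q \<and> p = Q * w" by (rule divides[of 1 0]) (use p in auto)
  moreover have "\<exists>Q. poly_over E Q \<and> m = Q * w" by (rule divides[of 0 1]) (use m in auto)
  moreover have "poly_over E w" using uv p m by simp
  ultimately show ?thesis using that[OF uv(1) _ uv(3,4)] by blast
qed

lemma adjoin_subset: "E \<subseteq> adjoin E \<gamma>"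
  unfolding adjoin_def by (force intro: image_eqI[where x = "[:_:]"])

lemma root_in_adjoin: "\<gamma> \<in> adjoin E \<gamma>"
  unfolding adjoin_def by (force intro: image_eqI[where x = "[:0, 1:]"])

lemma adjoin_least: "is_subfield T \<Longrightarrow> E \<subseteq> T \<Longrightarrow> \<gamma> \<in> T \<Longrightarrow> adjoin E \<gamma> \<subseteq> T"
  unfolding adjoin_def using type_subfield.poly_closed type_subfield.intro poly_over_mono by blast

lemma inverse_in_adjoin:
  assumes mp: "is_minpoly E \<gamma> m" and y: "y \<in> adjoin E \<gamma>"
  shows "inverse y \<in> adjoin E \<gamma>"
proof (cases "y = 0")
  case True
  then show ?thesis using y by simp
next
  case False
  from y obtain p where p: "poly_over E p" "y = poly p \<gamma>" unfolding adjoin_def by blast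
  have m: "poly_over E m" "m \<noteq> 0" "poly m \<gamma> = 0" using mp by (auto simp: is_minpoly_def)
  obtain u v w Q Q' where uvw: "poly_over E u" "poly_over E w" "w = u * p + v * m" "w \<noteq> 0"
    and Q: "poly_over E Q" "m = Q * w" and Q': "p = Q' * w"
    using poly_over_bezout[OF p(1) m(1,2)] by metis
  have "poly w \<gamma> \<noteq> 0" using Q' p(2) False by auto
  then have "poly Q \<gamma> = 0" "Q \<noteq> 0" using Q m by auto
  then have "degree m \<le> degree Q" using minpoly_degree_le[OF mp Q(1)] by blast
  then have "degree w = 0" using Q(2) m(2) by (simp add: degree_mult_eq)
  then obtain c where c: "w = [:c:]" "c \<noteq> 0" using uvw(4) by (metis degree_eq_zeroE pCons_0_0)
  have "c = poly u \<gamma> * y" using arg_cong[OF uvw(3), of "\<lambda>w. poly w \<gamma>"] c m(3) p(2) by simp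
  then have "inverse y = poly (Polynomial.smult (inverse c) u) \<gamma>" using c(2) False by (simp add: field_simps)
  then show ?thesis
    using uvw(1,2) c(1) unfolding adjoin_def by (auto intro!: image_eqI[where x = "Polynomial.smult (inverse c) u"])
qed

lemma subfield_adjoin:
  assumes "is_minpoly E \<gamma> m"
  shows "is_subfield (adjoin E \<gamma>)"
  unfolding is_subfield_def
proof (intro conjI ballI)
  show "0 \<in> adjoin E \<gamma>" "1 \<in> adjoin E \<gamma>" using adjoin_subset[of \<gamma>] by auto
  fix x y assume "x \<in> adjoin E \<gamma>" "y \<in> adjoin E \<gamma>"
  then obtain p1 p2 where "poly_over E p1" "x = poly p1 \<gamma>" "poly_over E p2" "y = poly p2 \<gamma>"
    unfolding adjoin_def by blast
  then show "x + y \<in> adjoin E \<gamma>" "x * y \<in> adjoin E \<gamma>"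
    unfolding adjoin_def
    by (auto intro: image_eqI[where x = "p1 + p2"]) (auto intro: image_eqI[where x = "p1 * p2"])
next
  fix x assume x: "x \<in> adjoin E \<gamma>"
  then obtain p where "poly_over E p" "x = poly p \<gamma>" unfolding adjoin_def by blast
  then show "- x \<in> adjoin E \<gamma>" unfolding adjoin_def by (auto intro!: image_eqI[where x = "- p"])
  show "inverse x \<in> adjoin E \<gamma>" by (rule inverse_in_adjoin[OF assms x])
qed

end

context type_subfield_hom
begin

text \<open>The extension sends \<open>p(\<gamma>)\<close> to \<open>(\<tau> p)(\<delta>)\<close>; this is well defined because the polynomials
  over \<open>E\<close> vanishing at \<open>\<gamma>\<close> are the multiples of \<open>m\<close>.\<close>

lemma extend_to_adjoin:
  assumes mp: "is_minpoly E \<gamma> m" and \<delta>: "poly (map_poly \<tau> m) \<delta> = 0"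
  obtains \<tau>' where "hom_on (adjoin E \<gamma>) \<tau>'" "\<forall>x\<in>E. \<tau>' x = \<tau> x" "\<tau>' \<gamma> = \<delta>"
proof -
  have mE: "poly_over E m" using mp by (simp add: is_minpoly_def)
  have well_defined: "poly (map_poly \<tau> p1) \<delta> = poly (map_poly \<tau> p2) \<delta>"
    if "poly_over E p1" "poly_over E p2" "poly p1 \<gamma> = poly p2 \<gamma>" for p1 p2
  proof -
    have "poly_over E (p1 - p2)" "poly (p1 - p2) \<gamma> = 0" using that by simp_all
    then obtain h where h: "poly_over E h" "p1 - p2 = m * h" using mp unfolding is_minpoly_def by blast
    have "map_poly \<tau> p1 - map_poly \<tau> p2 = map_poly \<tau> m * map_poly \<tau> h"
      using map_poly_diff[OF that(1,2)] map_poly_mult[OF mE h(1)] h(2) by simp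
    then show ?thesis using \<delta> by (metis eq_iff_diff_eq_0 mult_zero_left poly_diff poly_mult)
  qed
  define \<tau>' where "\<tau>' y = poly (map_poly \<tau> (SOME p. poly_over E p \<and> poly p \<gamma> = y)) \<delta>" for y
  have eval: "\<tau>' (poly p \<gamma>) = poly (map_poly \<tau> p) \<delta>" if "poly_over E p" for p
  proof -
    have "\<exists>p'. poly_over E p' \<and> poly p' \<gamma> = poly p \<gamma>" using that by blast
    from someI_ex[OF this] show ?thesis unfolding \<tau>'_def using well_defined that by blast
  qed
  have "hom_on (adjoin E \<gamma>) \<tau>'" unfolding hom_on_def
  proof (intro conjI ballI)
    show "\<tau>' 1 = 1" using eval[of 1] by simp
    fix x y assume "x \<in> adjoin E \<gamma>" "y \<in> adjoin E \<gamma>"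
    then obtain p1 p2 where p: "poly_over E p1" "x = poly p1 \<gamma>" "poly_over E p2" "y = poly p2 \<gamma>"
      unfolding adjoin_def by blast
    show "\<tau>' (x + y) = \<tau>' x + \<tau>' y" "\<tau>' (x * y) = \<tau>' x * \<tau>' y"
      using eval[of "p1 + p2"] eval[of "p1 * p2"] eval[of p1] eval[of p2] p
      by (simp_all add: map_poly_add map_poly_mult)
  qed
  moreover have "\<forall>x\<in>E. \<tau>' x = \<tau> x"
  proof
    fix x assume "x \<in> E"
    moreover have "map_poly \<tau> [:x:] = [:\<tau> x:]" by (simp add: map_poly_const)
    ultimately show "\<tau>' x = \<tau> x" using eval[of "[:x:]"] by simp
  qed
  moreover have "\<tau>' \<gamma> = \<delta>" using eval[of "[:0, 1:]"] by simp
  ultimately show ?thesis by (rule that)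
qed

end

section \<open>Groups of field automorphisms\<close>

definition field_auts :: "'c::field set \<Rightarrow> 'c set \<Rightarrow> ('c \<Rightarrow> 'c) set" where
  "field_auts K k = {\<sigma>. bij_betw \<sigma> K K \<and>
     (\<forall>x\<in>K. \<forall>y\<in>K. \<sigma> (x + y) = \<sigma> x + \<sigma> y \<and> \<sigma> (x * y) = \<sigma> x * \<sigma> y) \<and>
     (\<forall>a\<in>k. \<sigma> a = a) \<and> (\<forall>x. x \<notin> K \<longrightarrow> \<sigma> x = x)}"

lemma field_auts_restrict:
  assumes K: "is_subfield K" and "k \<subseteq> K" and hom: "hom_on K \<sigma>" and "bij_betw \<sigma> K K"
    and "\<forall>a\<in>k. \<sigma> a = a"
  shows "(\<lambda>x. if x \<in> K then \<sigma> x else x) \<in> field_auts K k"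
proof -
  interpret \<sigma>: type_subfield_hom K \<sigma> by unfold_locales (use K hom in simp_all)
  have "bij_betw (\<lambda>x. if x \<in> K then \<sigma> x else x) K K"
    using \<open>bij_betw \<sigma> K K\<close> by (rule bij_betw_cong[THEN iffD1, rotated]) simp
  then show ?thesis using assms unfolding field_auts_def by (auto simp: \<sigma>.hom_add \<sigma>.hom_mult)
qed

lemma field_auts_comp:
  assumes "\<sigma> \<in> field_auts K k" "\<rho> \<in> field_auts K k"
  shows "\<sigma> \<circ> \<rho> \<in> field_auts K k"
proof -
  have "bij_betw \<sigma> K K" "bij_betw \<rho> K K" using assms by (auto simp: field_auts_def)
  moreover have "\<rho> x \<in> K" if "x \<in> K" for x using \<open>bij_betw \<rho> K K\<close> that by (meson bij_betwE)
  ultimately show ?thesis using assms unfolding field_auts_def by (auto intro: bij_betw_trans)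
qed

lemma field_auts_inverse:
  assumes \<sigma>: "\<sigma> \<in> field_auts K k" and K: "is_subfield K" and kK: "k \<subseteq> K"
  obtains \<sigma>' where "\<sigma>' \<in> field_auts K k" "\<sigma>' \<circ> \<sigma> = id" "\<sigma> \<circ> \<sigma>' = id"
proof -
  interpret K: type_subfield K by unfold_locales (fact K)
  have bij: "bij_betw \<sigma> K K" and out: "\<And>x. x \<notin> K \<Longrightarrow> \<sigma> x = x"
    and hom: "\<And>x y. x \<in> K \<Longrightarrow> y \<in> K \<Longrightarrow> \<sigma> (x + y) = \<sigma> x + \<sigma> y \<and> \<sigma> (x * y) = \<sigma> x * \<sigma> y"
    and fixed: "\<And>a. a \<in> k \<Longrightarrow> \<sigma> a = a"
    using \<sigma> by (auto simp: field_auts_def)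
  define \<sigma>' where "\<sigma>' x = (if x \<in> K then inv_into K \<sigma> x else x)" for x
  have inv_in: "inv_into K \<sigma> x \<in> K" and inv_right: "\<sigma> (inv_into K \<sigma> x) = x" if "x \<in> K" for x
    using that bij by (auto simp: bij_betw_def inv_into_into f_inv_into_f)
  have inv_left: "inv_into K \<sigma> (\<sigma> x) = x" if "x \<in> K" for x
    using that bij by (simp add: bij_betw_def)
  have inv_eq: "\<sigma>' z = x" if "x \<in> K" "z = \<sigma> x" for x z
    using that inv_left bij by (auto simp: \<sigma>'_def bij_betw_def)
  have "\<sigma>' \<in> field_auts K k" unfolding field_auts_def
  proof (intro CollectI conjI ballI allI impI)
    show "bij_betw \<sigma>' K K"
      using bij_betw_inv_into[OF bij] by (rule bij_betw_cong[THEN iffD1, rotated]) (simp add: \<sigma>'_def)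
    fix x y assume xy: "x \<in> K" "y \<in> K"
    then have "\<sigma>' x \<in> K" "\<sigma>' y \<in> K" "\<sigma> (\<sigma>' x) = x" "\<sigma> (\<sigma>' y) = y"
      using inv_in inv_right by (simp_all add: \<sigma>'_def)
    then show "\<sigma>' (x + y) = \<sigma>' x + \<sigma>' y" "\<sigma>' (x * y) = \<sigma>' x * \<sigma>' y"
      using inv_eq[of "\<sigma>' x + \<sigma>' y" "x + y"] inv_eq[of "\<sigma>' x * \<sigma>' y" "x * y"] hom by simp_all
  next
    fix a assume "a \<in> k"
    then show "\<sigma>' a = a" using kK fixed inv_eq[of a a] by auto
  qed (simp add: \<sigma>'_def)
  moreover have "\<sigma>' \<circ> \<sigma> = id"
  proof
    fix x show "(\<sigma>' \<circ> \<sigma>) x = id x"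
      using inv_eq[of x "\<sigma> x"] out[of x] by (cases "x \<in> K") (simp_all add: \<sigma>'_def)
  qed
  moreover have "\<sigma> \<circ> \<sigma>' = id"
    using out inv_right by (auto simp: \<sigma>'_def fun_eq_iff)
  ultimately show ?thesis by (rule that)
qed

lemma card_orbit_dvd_card_field_auts:
  assumes K: "is_subfield K" and kK: "k \<subseteq> K" and "finite R"
    and into: "\<And>\<sigma>. \<sigma> \<in> field_auts K k \<Longrightarrow> \<sigma> \<alpha> \<in> R"
    and transitive: "\<And>\<beta>. \<beta> \<in> R \<Longrightarrow> \<exists>\<sigma>\<in>field_auts K k. \<sigma> \<alpha> = \<beta>"
  shows "card R dvd card (field_auts K k)"
proof (cases "finite (field_auts K k)")
  case True
  define fibre where "fibre \<beta> = {\<sigma>\<in>field_auts K k. \<sigma> \<alpha> = \<beta>}" for \<beta>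
  have "field_auts K k = (\<Union>\<beta>\<in>R. fibre \<beta>)" using into unfolding fibre_def by auto
  then have "card (field_auts K k) = (\<Sum>\<beta>\<in>R. card (fibre \<beta>))"
    by (simp only:) (rule card_UN_disjoint, use \<open>finite R\<close> True in \<open>auto simp: fibre_def\<close>)
  also have "\<dots> = (\<Sum>\<beta>\<in>R. card (fibre \<alpha>))"
  proof (rule sum.cong[OF refl])
    fix \<beta> assume "\<beta> \<in> R"
    from transitive[OF this] obtain \<sigma> where \<sigma>: "\<sigma> \<in> field_auts K k" "\<sigma> \<alpha> = \<beta>" by blast
    obtain \<sigma>' where \<sigma>': "\<sigma>' \<in> field_auts K k" "\<sigma>' \<circ> \<sigma> = id" "\<sigma> \<circ> \<sigma>' = id"
      using field_auts_inverse[OF \<sigma>(1) K kK] .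
    have "\<sigma>' \<beta> = \<alpha>" using \<sigma>'(2) \<sigma>(2) by (metis comp_apply id_apply)
    have "bij_betw (\<lambda>\<rho>. \<sigma> \<circ> \<rho>) (fibre \<alpha>) (fibre \<beta>)"
    proof (rule bij_betw_byWitness[where f' = "\<lambda>\<rho>. \<sigma>' \<circ> \<rho>"])
      show "\<forall>\<rho>\<in>fibre \<alpha>. \<sigma>' \<circ> (\<sigma> \<circ> \<rho>) = \<rho>" "\<forall>\<rho>\<in>fibre \<beta>. \<sigma> \<circ> (\<sigma>' \<circ> \<rho>) = \<rho>"
        using \<sigma>'(2,3) by (simp_all add: comp_assoc[symmetric])
      show "(\<lambda>\<rho>. \<sigma> \<circ> \<rho>) ` fibre \<alpha> \<subseteq> fibre \<beta>" "(\<lambda>\<rho>. \<sigma>' \<circ> \<rho>) ` fibre \<beta> \<subseteq> fibre \<alpha>"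
        using \<sigma> \<sigma>'(1) \<open>\<sigma>' \<beta> = \<alpha>\<close> field_auts_comp unfolding fibre_def by auto
    qed
    then show "card (fibre \<beta>) = card (fibre \<alpha>)" by (simp add: bij_betw_same_card)
  qed
  finally show ?thesis by simp
qed simp

lemma field_auts_preserves_roots:
  assumes "\<sigma> \<in> field_auts K k" "is_subfield K" "k \<subseteq> K" "is_subfield k"
    and "poly_over k p" "x \<in> K" "poly p x = 0"
  shows "poly p (\<sigma> x) = 0"
proof -
  have "\<sigma> 1 = 1" using assms(1,4) by (auto simp: field_auts_def is_subfield_def)
  then interpret \<sigma>: type_subfield_hom K \<sigma>
    using assms(1,2) by unfold_locales (auto simp: field_auts_def hom_on_def)
  have "poly p (\<sigma> x) = poly (map_poly \<sigma> p) (\<sigma> x)"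
    using map_poly_fixed[OF assms(5)] assms(1) by (simp add: field_auts_def)
  also have "\<dots> = 0"
    using \<sigma>.poly_map_poly_hom[OF poly_over_mono[OF assms(5,3)] assms(6)] assms(7) by simp
  finally show ?thesis .
qed


section \<open>Automorphisms of splitting fields\<close>

lemma root_of_dvd_linear_factors:
  fixes M :: "'c::field poly"
  assumes "M dvd Polynomial.smult c (\<Prod>r\<leftarrow>rs. [:- r, 1:])" "c \<noteq> 0" "degree M > 0"
  shows "\<exists>r\<in>set rs. poly M r = 0"
  using assms(1)
proof (induction rs)
  case Nil
  then have "degree M \<le> degree [:c:]" using assms(2) by (intro dvd_imp_degree_le) auto
  then show ?case using assms(3) by simp
next
  case (Cons r rs)
  show ?case
  proof (cases "poly M r = 0")
    case False
    from Cons.prems obtain N where N: "Polynomial.smult c (\<Prod>r\<leftarrow>r # rs. [:- r, 1:]) = M * N"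
      by (elim dvdE)
    have "poly (Polynomial.smult c (\<Prod>r\<leftarrow>r # rs. [:- r, 1:])) r = 0" by simp
    then have "poly M r * poly N r = 0" by (simp only: N poly_mult)
    then obtain N' where N': "N = [:- r, 1:] * N'" using False by (auto simp: poly_eq_0_iff_dvd elim: dvdE)
    have "[:- r, 1:] * Polynomial.smult c (\<Prod>r\<leftarrow>rs. [:- r, 1:]) = [:- r, 1:] * (M * N')"
      using N N' by (simp add: algebra_simps)
    then have "Polynomial.smult c (\<Prod>r\<leftarrow>rs. [:- r, 1:]) = M * N'"
      by (subst (asm) mult_left_cancel) simp_all
    then have "M dvd Polynomial.smult c (\<Prod>r\<leftarrow>rs. [:- r, 1:])" by (rule dvdI)
    then show ?thesis using Cons.IH by auto
  qed simp
qed

lemma subfield_gen_subfield: "is_subfield (gen_subfield A)"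
  unfolding gen_subfield_def is_subfield_def by blast

lemma gen_subfield_subset: "A \<subseteq> gen_subfield A"
  unfolding gen_subfield_def by blast

lemma gen_subfield_least: "is_subfield T \<Longrightarrow> A \<subseteq> T \<Longrightarrow> gen_subfield A \<subseteq> T"
  unfolding gen_subfield_def by blast

lemma gen_subfield_eqI: "A \<subseteq> gen_subfield B \<Longrightarrow> B \<subseteq> gen_subfield A \<Longrightarrow> gen_subfield A = gen_subfield B"
  using gen_subfield_least[OF subfield_gen_subfield] by blast

lemma gen_subfield_idem: "is_subfield E \<Longrightarrow> gen_subfield E = E"
  by (simp add: gen_subfield_least gen_subfield_subset subset_antisym)

locale splitting_poly =
  fixes k :: "'c::field set" and F :: "'c poly" and c :: 'c and rs :: "'c list"
  assumes subfield_k: "is_subfield k" and poly_over_F: "poly_over k F"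
    and F_split: "F = Polynomial.smult c (\<Prod>r\<leftarrow>rs. [:- r, 1:])" and c_nonzero: "c \<noteq> 0"
begin

sublocale k: type_subfield k by (rule type_subfield.intro) (rule subfield_k)

lemma F_nonzero: "F \<noteq> 0"
  unfolding F_split using c_nonzero by (auto simp: prod_list_zero_iff)

lemma roots_F: "{x. poly F x = 0} = set rs"
  unfolding F_split using c_nonzero by (auto simp: poly_prod_list_zero_iff)

definition splitting_field :: "'c set" where
  "splitting_field = gen_subfield (k \<union> set rs)"

lemma subfield_splitting_field: "is_subfield splitting_field"
  unfolding splitting_field_def by (rule subfield_gen_subfield)

lemma base_subset_splitting_field: "k \<subseteq> splitting_field"
  and roots_subset_splitting_field: "set rs \<subseteq> splitting_field"
  using gen_subfield_subset[of "k \<union> set rs"] unfolding splitting_field_def by auto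

lemma mapped_minpoly_has_root:
  assumes "type_subfield_hom E \<tau>" "k \<subseteq> E" "\<forall>x\<in>k. \<tau> x = x" "is_minpoly E x m" "x \<in> set rs"
  shows "\<exists>\<delta>. poly (map_poly \<tau> m) \<delta> = 0"
proof -
  interpret E: type_subfield_hom E \<tau> by fact
  have "poly_over E F" using poly_over_F assms(2) poly_over_mono by blast
  moreover have "poly F x = 0" using assms(5) roots_F by auto
  ultimately obtain h where h: "poly_over E h" "F = m * h" using assms(4) unfolding is_minpoly_def by blast
  have "F = map_poly \<tau> m * map_poly \<tau> h"
    using map_poly_fixed[OF poly_over_F assms(3)] E.map_poly_mult[OF _ h(1)] h(2) assms(4)
    by (simp add: is_minpoly_def)
  then have dvd: "map_poly \<tau> m dvd Polynomial.smult c (\<Prod>r\<leftarrow>rs. [:- r, 1:])"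
    using F_split by (metis dvd_triv_left)
  have "coeff (map_poly \<tau> m) (degree m) = 1" using assms(4) by (simp add: is_minpoly_def coeff_map_poly)
  then have "degree (map_poly \<tau> m) > 0"
    using minpoly_degree_pos[OF assms(4)] le_degree[of "map_poly \<tau> m" "degree m"] by simp
  with root_of_dvd_linear_factors[OF dvd c_nonzero] show ?thesis by blast
qed

lemma extend_hom_to_roots:
  assumes "is_subfield E" "k \<subseteq> E" "hom_on E \<tau>" "\<forall>x\<in>k. \<tau> x = x" "set xs \<subseteq> set rs"
  shows "\<exists>\<tau>'. hom_on (gen_subfield (E \<union> set xs)) \<tau>' \<and> (\<forall>x\<in>E. \<tau>' x = \<tau> x)"
  using assms
proof (induction xs arbitrary: E \<tau>)
  case Nil
  then show ?case by (auto simp: gen_subfield_idem)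
next
  case (Cons x xs)
  interpret E: type_subfield_hom E \<tau> by unfold_locales (use Cons.prems in auto)
  have FE: "poly_over E F" using poly_over_F Cons.prems(2) poly_over_mono by blast
  have Fx: "poly F x = 0" using Cons.prems(5) roots_F by auto
  obtain m where mp: "is_minpoly E x m" using E.minpoly_exists[OF FE F_nonzero Fx] .
  obtain \<delta> where "poly (map_poly \<tau> m) \<delta> = 0"
    using mapped_minpoly_has_root[OF E.type_subfield_hom_axioms Cons.prems(2,4) mp] Cons.prems(5) by auto
  from E.extend_to_adjoin[OF mp this] obtain \<tau>1 where
    \<tau>1: "hom_on (adjoin E x) \<tau>1" "\<forall>y\<in>E. \<tau>1 y = \<tau> y" .
  have "k \<subseteq> adjoin E x" using Cons.prems(2) E.adjoin_subset by blast
  moreover have "\<forall>y\<in>k. \<tau>1 y = y" using \<tau>1(2) Cons.prems(2,4) by auto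
  ultimately obtain \<tau>' where
    \<tau>': "hom_on (gen_subfield (adjoin E x \<union> set xs)) \<tau>'" "\<forall>y\<in>adjoin E x. \<tau>' y = \<tau>1 y"
    using Cons.IH[OF E.subfield_adjoin[OF mp] _ \<tau>1(1)] Cons.prems(5) by auto
  have "gen_subfield (adjoin E x \<union> set xs) = gen_subfield (E \<union> set (x # xs))"
  proof (rule gen_subfield_eqI)
    show "adjoin E x \<union> set xs \<subseteq> gen_subfield (E \<union> set (x # xs))"
      using E.adjoin_least[OF subfield_gen_subfield] gen_subfield_subset[of "E \<union> set (x # xs)"] by auto
    show "E \<union> set (x # xs) \<subseteq> gen_subfield (adjoin E x \<union> set xs)"
      using E.adjoin_subset[of x] E.root_in_adjoin[of x] gen_subfield_subset[of "adjoin E x \<union> set xs"] by auto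
  qed
  then show ?case using \<tau>' \<tau>1(2) E.adjoin_subset[of x] by (intro exI[of _ \<tau>']) auto
qed

lemma hom_permutes_roots:
  assumes "hom_on splitting_field \<sigma>" "\<forall>x\<in>k. \<sigma> x = x"
  shows "\<sigma> ` set rs = set rs"
proof -
  interpret \<sigma>: type_subfield_hom splitting_field \<sigma>
    by unfold_locales (use assms(1) subfield_splitting_field in simp_all)
  have "\<sigma> ` set rs \<subseteq> set rs"
  proof
    fix y assume "y \<in> \<sigma> ` set rs"
    then obtain x where x: "x \<in> set rs" "y = \<sigma> x" by blast
    have "poly F y = poly (map_poly \<sigma> F) (\<sigma> x)" using map_poly_fixed[OF poly_over_F assms(2)] x(2) by simp
    also have "\<dots> = \<sigma> (poly F x)"
      using \<sigma>.poly_map_poly_hom poly_over_mono[OF poly_over_F base_subset_splitting_field] x(1)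
        roots_subset_splitting_field by blast
    also have "\<dots> = 0" using x(1) roots_F[symmetric] by simp
    finally show "y \<in> set rs" using roots_F by blast
  qed
  then show ?thesis
    using card_subset_eq[OF finite_set] card_image[OF inj_on_subset[OF \<sigma>.inj_on_hom roots_subset_splitting_field]]
    by simp
qed

lemma hom_bij_splitting_field:
  assumes "hom_on splitting_field \<sigma>" "\<forall>x\<in>k. \<sigma> x = x"
  shows "bij_betw \<sigma> splitting_field splitting_field"
proof -
  let ?K = splitting_field
  interpret \<sigma>: type_subfield_hom ?K \<sigma>
    by unfold_locales (use assms(1) subfield_splitting_field in simp_all)
  note k_K = base_subset_splitting_field and rs_K = roots_subset_splitting_field
  have roots_perm: "\<sigma> ` set rs = set rs" by (rule hom_permutes_roots[OF assms])
  have "k \<subseteq> \<sigma> ` ?K"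
  proof
    fix x assume "x \<in> k"
    then have "x = \<sigma> x" "x \<in> ?K" using assms(2) k_K by auto
    then show "x \<in> \<sigma> ` ?K" by (rule image_eqI)
  qed
  moreover have "set rs \<subseteq> \<sigma> ` ?K" using roots_perm rs_K by (metis image_mono)
  ultimately have "k \<union> set rs \<subseteq> \<sigma> ` ?K" by (rule Un_least)
  then have "?K \<subseteq> \<sigma> ` ?K"
    using gen_subfield_least[OF \<sigma>.subfield_image] by (simp add: splitting_field_def)
  moreover have "k \<union> set rs \<subseteq> {x\<in>?K. \<sigma> x \<in> ?K}" using assms(2) k_K roots_perm rs_K by auto
  then have "?K \<subseteq> {x\<in>?K. \<sigma> x \<in> ?K}"
    using gen_subfield_least[OF \<sigma>.subfield_preimage[OF subfield_splitting_field]]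
    by (simp add: splitting_field_def)
  ultimately show ?thesis using \<sigma>.inj_on_hom by (auto simp: bij_betw_def)
qed

lemma automorphism_to_root:
  assumes mp: "is_minpoly k \<alpha> m" and \<alpha>: "\<alpha> \<in> set rs" and \<beta>: "poly m \<beta> = 0"
  obtains \<sigma> where "\<sigma> \<in> field_auts splitting_field k" "\<sigma> \<alpha> = \<beta>"
proof -
  have "type_subfield_hom k (\<lambda>x. x)"
    by (intro type_subfield_hom.intro type_subfield_hom_axioms.intro k.type_subfield_axioms hom_on_id)
  moreover have "poly (map_poly (\<lambda>x. x) m) \<beta> = 0" using \<beta> by simp
  ultimately
  obtain \<tau> where \<tau>: "hom_on (adjoin k \<alpha>) \<tau>" "\<forall>y\<in>k. \<tau> y = y" "\<tau> \<alpha> = \<beta>"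
    using type_subfield_hom.extend_to_adjoin[OF _ mp] by blast
  obtain \<sigma> where \<sigma>: "hom_on (gen_subfield (adjoin k \<alpha> \<union> set rs)) \<sigma>" "\<forall>y\<in>adjoin k \<alpha>. \<sigma> y = \<tau> y"
    using extend_hom_to_roots[OF k.subfield_adjoin[OF mp] k.adjoin_subset \<tau>(1,2) order_refl] by blast
  have "gen_subfield (adjoin k \<alpha> \<union> set rs) = splitting_field"
    unfolding splitting_field_def
  proof (rule gen_subfield_eqI)
    show "adjoin k \<alpha> \<union> set rs \<subseteq> gen_subfield (k \<union> set rs)"
      using k.adjoin_least[OF subfield_gen_subfield] gen_subfield_subset[of "k \<union> set rs"] \<alpha> by blast
    show "k \<union> set rs \<subseteq> gen_subfield (adjoin k \<alpha> \<union> set rs)"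
      using k.adjoin_subset[of \<alpha>] gen_subfield_subset[of "adjoin k \<alpha> \<union> set rs"] by blast
  qed
  with \<sigma>(1) have hom: "hom_on splitting_field \<sigma>" by simp
  have fix_k: "\<forall>x\<in>k. \<sigma> x = x" using \<sigma>(2) \<tau>(2) k.adjoin_subset[of \<alpha>] by auto
  have "(\<lambda>x. if x \<in> splitting_field then \<sigma> x else x) \<in> field_auts splitting_field k"
    by (rule field_auts_restrict[OF subfield_splitting_field base_subset_splitting_field hom
          hom_bij_splitting_field[OF hom fix_k] fix_k])
  moreover have "(\<lambda>x. if x \<in> splitting_field then \<sigma> x else x) \<alpha> = \<beta>"
    using \<sigma>(2) \<tau>(3) k.root_in_adjoin[of \<alpha>] \<alpha> roots_subset_splitting_field by auto
  ultimately show ?thesis by (rule that)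
qed

lemma card_roots_minpoly_dvd_card_field_auts:
  assumes mp: "is_minpoly k \<alpha> m" and \<alpha>: "\<alpha> \<in> set rs"
  shows "card {\<beta>. poly m \<beta> = 0} dvd card (field_auts splitting_field k)"
proof (rule card_orbit_dvd_card_field_auts[OF subfield_splitting_field base_subset_splitting_field])
  have "m \<noteq> 0" using minpoly_degree_pos[OF mp] by auto
  then show "finite {\<beta>. poly m \<beta> = 0}" by (rule poly_roots_finite)
next
  fix \<sigma> assume \<sigma>: "\<sigma> \<in> field_auts splitting_field k"
  have m: "poly_over k m" "poly m \<alpha> = 0" using mp by (simp_all add: is_minpoly_def)
  then have "poly m (\<sigma> \<alpha>) = 0"
    using field_auts_preserves_roots[OF \<sigma> subfield_splitting_field base_subset_splitting_field subfield_k m(1)]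
      \<alpha> roots_subset_splitting_field by blast
  then show "\<sigma> \<alpha> \<in> {\<beta>. poly m \<beta> = 0}" by simp
next
  fix \<beta> assume "\<beta> \<in> {\<beta>. poly m \<beta> = 0}"
  then have "poly m \<beta> = 0" by simp
  from automorphism_to_root[OF mp \<alpha> this]
  show "\<exists>\<sigma>\<in>field_auts splitting_field k. \<sigma> \<alpha> = \<beta>" by blast
qed

end

section \<open>Irreducibility of polynomials linear in the parameter\<close>

text \<open>For a bivariate polynomial \<open>P \<in> F[y][x]\<close>, \<open>swap_vars P\<close> is the same polynomial read in
  \<open>F[x][y]\<close>.\<close>

definition swap_vars :: "'a::field poly poly \<Rightarrow> 'a poly poly" where
  "swap_vars P = poly (map_poly (map_poly (\<lambda>e. [:e:])) P) [:[:0, 1:]:]"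

lemma coeff_coeff_swap_vars: "coeff (coeff (swap_vars P) j) k = coeff (coeff P k) j"
proof (induction P arbitrary: k rule: pCons_induct)
  case (pCons c P)
  have "map_poly (map_poly (\<lambda>e. [:e:])) (pCons c P)
      = pCons (map_poly (\<lambda>e. [:e:]) c) (map_poly (map_poly (\<lambda>e. [:e:])) P)"
    by (rule poly_eqI) (simp add: coeff_map_poly coeff_pCons split: nat.splits)
  then have "swap_vars (pCons c P) = map_poly (\<lambda>e. [:e:]) c + [:[:0, 1:]:] * swap_vars P"
    unfolding swap_vars_def by (simp only: poly_pCons)
  then show ?case by (cases k) (simp_all add: coeff_map_poly coeff_pCons pCons.IH)
qed (simp add: swap_vars_def)

lemma swap_vars_swap_vars [simp]: "swap_vars (swap_vars P) = P"
  by (intro poly_eqI) (simp add: poly_eq_iff coeff_coeff_swap_vars)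

lemma swap_vars_eq_0_iff [simp]: "swap_vars P = 0 \<longleftrightarrow> P = 0"
proof
  assume "swap_vars P = 0"
  then have "coeff (coeff P k) j = 0" for k j using coeff_coeff_swap_vars[of P j k] by simp
  then show "P = 0" by (intro poly_eqI) (simp add: poly_eq_iff)
qed (simp add: swap_vars_def)

lemma swap_vars_mult: "swap_vars (A * B) = swap_vars A * swap_vars B"
proof -
  interpret map_poly_comm_ring_hom "\<lambda>e::'a. [:e:]" by unfold_locales auto
  interpret lift: map_poly_comm_ring_hom "map_poly (\<lambda>e::'a. [:e:])" by unfold_locales
  show ?thesis unfolding swap_vars_def by (simp add: lift.hom_mult)
qed

text \<open>\<open>add_param P\<close> is \<open>P(x) + t\<close>, as a polynomial in \<open>x\<close> over \<open>F[t]\<close>.\<close>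

definition add_param :: "'a::field poly \<Rightarrow> 'a poly poly" where
  "add_param P = map_poly (\<lambda>c. [:c:]) P + [:[:0, 1:]:]"

lemma swap_vars_add_param: "swap_vars (add_param P) = [:P, 1:]"
  unfolding add_param_def
  by (intro poly_eqI) (auto simp: coeff_coeff_swap_vars coeff_map_poly coeff_pCons split: nat.splits)

lemma coeff_add_param: "coeff (add_param P) k = [:coeff P k:] + (if k = 0 then [:0, 1:] else 0)"
  unfolding add_param_def by (simp add: coeff_map_poly coeff_pCons split: nat.splits)

lemma degree_add_param:
  assumes "degree P > 0"
  shows "degree (add_param P) = degree P"
proof (rule antisym)
  show "degree (add_param P) \<le> degree P"
    using assms by (intro degree_le) (simp add: coeff_add_param coeff_eq_0)
  have "P \<noteq> 0" using assms by auto
  then have "coeff (add_param P) (degree P) \<noteq> 0"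
    using assms by (simp add: coeff_add_param)
  then show "degree P \<le> degree (add_param P)" by (rule le_degree)
qed

lemma poly_add_param_0: "poly (add_param P) 0 \<noteq> 0"
  by (simp add: poly_0_coeff_0 coeff_add_param)

lemma fract_poly_clear_denominators:
  fixes A :: "'b::idom fract poly"
  obtains c A0 where "c \<noteq> 0" "fract_poly A0 = Polynomial.smult (to_fract c) A"
proof -
  have "\<exists>c A0. c \<noteq> 0 \<and> fract_poly A0 = Polynomial.smult (to_fract c) A"
  proof (induction A rule: pCons_induct)
    case (pCons a A)
    then obtain c A0 where cA: "c \<noteq> 0" "fract_poly A0 = Polynomial.smult (to_fract c) A" by blast
    obtain u v where a: "a = Fract u v" "v \<noteq> 0" by (cases a) auto
    have "to_fract v * a = to_fract u" using a by (simp add: Fract_conv_to_fract)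
    moreover have "fract_poly (pCons (c * u) (Polynomial.smult v A0))
        = pCons (to_fract (c * u)) (fract_poly (Polynomial.smult v A0))"
      by (rule poly_eqI) (simp add: coeff_map_poly coeff_pCons split: nat.splits)
    ultimately have "fract_poly (pCons (c * u) (Polynomial.smult v A0))
        = Polynomial.smult (to_fract (c * v)) (pCons a A)"
      using cA by (simp add: mult_ac)
    then show ?case using cA a by (intro exI[of _ "c * v"] exI[of _ "pCons (c * u) (Polynomial.smult v A0)"]) simp
  qed (intro exI[of _ 1] exI[of _ 0], simp)
  then show ?thesis using that by (elim exE conjE)
qed

lemma cofactor_of_add_param_const:
  assumes eq: "A * B = Polynomial.smult c (add_param P)" and "c \<noteq> 0"
    and root: "poly (swap_vars A) (- P) = 0"
  shows "degree B = 0"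
proof -
  have "[:- (- P), 1:] dvd swap_vars A" using root by (simp only: poly_eq_0_iff_dvd)
  then obtain D where "swap_vars A = [:P, 1:] * D" by (auto elim: dvdE)
  then have "swap_vars A = swap_vars (add_param P * swap_vars D)"
    unfolding swap_vars_mult swap_vars_add_param by simp
  then have A: "A = add_param P * swap_vars D" by (metis swap_vars_swap_vars)
  have "swap_vars (add_param P) \<noteq> 0" unfolding swap_vars_add_param by simp
  then have "add_param P \<noteq> 0" by simp
  moreover have "add_param P * (swap_vars D * B) = add_param P * [:c:]"
    using eq unfolding A by (simp add: mult_ac)
  ultimately have "swap_vars D * B = [:c:]" using mult_left_cancel by blast
  moreover from this have "swap_vars D \<noteq> 0" "B \<noteq> 0" using \<open>c \<noteq> 0\<close> by (auto simp: swap_vars_def)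
  ultimately show ?thesis by (metis degree_mult_eq degree_pCons_0 add_is_0)
qed

text \<open>After clearing denominators a factorisation of \<open>P(x) + t\<close> over \<open>F(t)\<close> becomes
  \<open>A * B = c (P(x) + t)\<close> over \<open>F[t]\<close>; substituting \<open>t = -P(x)\<close> kills one factor, which is then
  a multiple of \<open>P(x) + t\<close>, so the other one is constant.\<close>

lemma irreducible_fract_poly_add_param:
  assumes "degree P > 0"
  shows "irreducible (fract_poly (add_param P))"
proof (rule irreducibleI)
  have "degree (fract_poly (add_param P)) > 0" using assms by (simp add: degree_add_param)
  then show nz: "fract_poly (add_param P) \<noteq> 0" and "\<not> fract_poly (add_param P) dvd 1"
    by (auto simp: is_unit_iff_degree)
  fix A B assume AB: "fract_poly (add_param P) = A * B"
  then have "A \<noteq> 0" "B \<noteq> 0" using nz by auto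
  obtain cA A0 where cA: "cA \<noteq> 0" "fract_poly A0 = Polynomial.smult (to_fract cA) A"
    by (rule fract_poly_clear_denominators)
  obtain cB B0 where cB: "cB \<noteq> 0" "fract_poly B0 = Polynomial.smult (to_fract cB) B"
    by (rule fract_poly_clear_denominators)
  have "fract_poly (A0 * B0) = fract_poly (Polynomial.smult (cA * cB) (add_param P))"
    using cA cB AB by (simp add: mult_ac)
  then have eq: "A0 * B0 = Polynomial.smult (cA * cB) (add_param P)" by (simp only: fract_poly_eq_iff)
  have "poly (swap_vars (add_param P)) (- P) = 0" unfolding swap_vars_add_param by simp
  moreover have "Polynomial.smult (cA * cB) (add_param P) = [:cA * cB:] * add_param P" by simp
  ultimately have "poly (swap_vars (A0 * B0)) (- P) = 0"
    unfolding eq by (simp only: swap_vars_mult poly_mult mult_zero_right)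
  then have "poly (swap_vars A0) (- P) = 0 \<or> poly (swap_vars B0) (- P) = 0"
    by (simp add: swap_vars_mult)
  moreover have eq': "B0 * A0 = Polynomial.smult (cA * cB) (add_param P)" using eq by (simp add: mult.commute)
  moreover have "cA * cB \<noteq> 0" using cA cB by simp
  ultimately have "degree B0 = 0 \<or> degree A0 = 0"
    using cofactor_of_add_param_const[OF eq] cofactor_of_add_param_const[OF eq'] by auto
  moreover have "degree A0 = degree A" "degree B0 = degree B"
    using arg_cong[OF cA(2), of degree] arg_cong[OF cB(2), of degree] cA(1) cB(1)
    by (simp_all add: to_fract_hom.degree_map_poly_hom)
  ultimately have "degree B = 0 \<or> degree A = 0" by simp
  then show "A dvd 1 \<or> B dvd 1" using \<open>A \<noteq> 0\<close> \<open>B \<noteq> 0\<close> by (auto simp: is_unit_iff_degree)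
qed

section \<open>The polynomial \<open>L(x) + t x\<close>\<close>

lemma card_finite_field_ge_2: "card (UNIV :: 'a::finite_field set) \<ge> 2"
  using card_mono[of UNIV "{0, 1 :: 'a}"] by simp

lemma of_nat_card_finite_field: "of_nat (card (UNIV :: 'a::finite_field set)) = (0 :: 'a)"
proof -
  have "(\<Sum>x\<in>(UNIV::'a set). x + 1) = (\<Sum>x\<in>(UNIV::'a set). x)"
    by (rule sum.reindex_bij_witness[of _ "\<lambda>x. x - 1" "\<lambda>x. x + 1"]) auto
  then show ?thesis by (simp add: sum.distrib)
qed

text \<open>\<open>q_poly_shift q n a\<close> is \<open>L(x)/x\<close> for \<open>L = q_poly q n a\<close>.\<close>

definition q_poly_shift :: "nat \<Rightarrow> nat \<Rightarrow> (nat \<Rightarrow> 'a::field) \<Rightarrow> 'a poly" where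
  "q_poly_shift q n a = (\<Sum>i\<le>n. monom (a i) (q ^ i - 1))"

lemma q_poly_eq_shift_mult_x:
  assumes "q > 0"
  shows "q_poly q n a = q_poly_shift q n a * [:0, 1:]"
proof -
  have "monom (a i) (q ^ i - 1) * [:0, 1:] = monom (a i) (q ^ i)" for i
  proof -
    have "monom (a i) (q ^ i - 1) * [:0, 1:] = monom (a i) (Suc (q ^ i - 1))"
      by (simp add: monom_Suc mult.commute)
    then show ?thesis using assms by simp
  qed
  then show ?thesis unfolding q_poly_def q_poly_shift_def sum_distrib_right by simp
qed

lemma degree_q_poly_shift:
  assumes q: "q \<ge> 2" and "a n \<noteq> 0"
  shows "degree (q_poly_shift q n a) = q ^ n - 1"
proof -
  have q_pow_le: "q ^ i \<le> q ^ n" if "i \<le> n" for i using q that by (simp add: power_increasing)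
  have inj: "q ^ i - 1 = q ^ j - 1 \<longleftrightarrow> i = j" for i j
  proof -
    have "q ^ i \<ge> 1" "q ^ j \<ge> 1" using q by simp_all
    then have "q ^ i - 1 = q ^ j - 1 \<longleftrightarrow> q ^ i = q ^ j" by linarith
    then show ?thesis using q by (simp add: power_inject_exp)
  qed
  have coeff: "coeff (q_poly_shift q n a) k = (\<Sum>i\<le>n. if q ^ i - 1 = k then a i else 0)" for k
    unfolding q_poly_shift_def by (simp add: coeff_sum coeff_monom)
  show ?thesis
  proof (rule antisym)
    have "q ^ i - 1 \<noteq> k" if "k > q ^ n - 1" "i \<le> n" for i k
      using q_pow_le[OF that(2)] that(1) by linarith
    then show "degree (q_poly_shift q n a) \<le> q ^ n - 1"
      by (intro degree_le) (simp add: coeff)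
    have "coeff (q_poly_shift q n a) (q ^ n - 1) = a n"
      unfolding coeff inj by simp
    then show "q ^ n - 1 \<le> degree (q_poly_shift q n a)" using assms(2) by (metis le_degree)
  qed
qed

lemma pderiv_q_poly:
  assumes "of_nat q = (0 :: 'a::field)"
  shows "pderiv (q_poly q n (a :: nat \<Rightarrow> 'a)) = [:a 0:]"
proof -
  have "pderiv (monom (a i) (q ^ i)) = (if i = 0 then [:a 0:] else 0)" for i
    using assms by (cases i) (simp_all add: pderiv_monom monom_0)
  then show ?thesis unfolding q_poly_def pderiv_sum by simp
qed

lemma lift_Ft_eq_fract_poly: "lift_Ft p = fract_poly (map_poly (\<lambda>c. [:c:]) p)"
  unfolding lift_Ft_def by (subst map_poly_map_poly) (auto simp: o_def)

lemma q_poly_add_t_eq: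
  assumes "q > 0"
  shows "lift_Ft (q_poly q n a) + monom tvar 1 = fract_poly (add_param (q_poly_shift q n a)) * [:0, 1:]"
proof -
  have x: "[:0, 1:] = monom 1 1" for x :: "'b::comm_semiring_1 itself" by (simp add: monom_Suc monom_0)
  interpret const: map_poly_comm_ring_hom "\<lambda>e::'a. [:e:]" by unfold_locales auto
  let ?P = "q_poly_shift q n a"
  have "map_poly (\<lambda>c. [:c:]) (q_poly q n a) + monom [:0, 1:] 1 = add_param ?P * monom 1 1"
    unfolding q_poly_eq_shift_mult_x[OF assms] add_param_def x
    by (simp add: const.hom_mult map_poly_monom distrib_right smult_monom)
  then have "fract_poly (map_poly (\<lambda>c. [:c:]) (q_poly q n a)) + fract_poly (monom [:0, 1:] 1)
      = fract_poly (add_param ?P) * monom 1 1"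
    by (metis fract_poly_add fract_poly_mult map_poly_monom to_fract_0 to_fract_1)
  then show ?thesis
    unfolding lift_Ft_eq_fract_poly tvar_def x by (simp add: map_poly_monom)
qed

lemma pderiv_q_poly_add_t:
  assumes "of_nat q = (0 :: 'a::field)"
  shows "pderiv (lift_Ft (q_poly q n (a :: nat \<Rightarrow> 'a)) + monom tvar 1) = [:to_fract [:a 0, 1:]:]"
proof -
  have "pderiv (lift_Ft (q_poly q n a)) = lift_Ft [:a 0:]"
    unfolding lift_Ft_eq_fract_poly to_fract_hom.map_poly_pderiv[symmetric] coeff_lift_hom.map_poly_pderiv[symmetric]
      pderiv_q_poly[OF assms] ..
  moreover have "lift_Ft [:a 0:] = [:to_fract [:a 0:]:]" by (simp add: lift_Ft_def map_poly_const)
  moreover have "to_fract [:a 0:] + tvar = to_fract [:a 0, 1:]"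
    unfolding tvar_def by (simp flip: to_fract_add)
  ultimately show ?thesis by (simp add: pderiv_add pderiv_monom monom_0)
qed

section \<open>Roots of irreducible factors and the Galois group\<close>

lemma field_embedding_imp_field_hom:
  assumes "field_embedding \<phi>"
  shows "field_hom \<phi>"
proof -
  have "\<phi> 0 + \<phi> 0 = \<phi> 0 + 0" using assms unfolding field_embedding_def by (metis add_0 add_0_right)
  then have "\<phi> 0 = 0" by (simp only: add_left_cancel)
  then show ?thesis using assms unfolding field_embedding_def by unfold_locales auto
qed

lemma subfield_range:
  assumes "field_hom \<phi>"
  shows "is_subfield (range \<phi>)"
proof -
  interpret field_hom \<phi> by fact
  show ?thesis unfolding is_subfield_def
    by (metis hom_zero hom_one hom_add hom_mult hom_uminus hom_inverse rangeI image_iff)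
qed

lemma poly_over_range_imp_map_poly:
  assumes "field_hom \<phi>" "poly_over (range \<phi>) p"
  shows "\<exists>p'. p = map_poly \<phi> p'"
proof -
  interpret field_hom \<phi> by fact
  have "inv_into UNIV \<phi> 0 = 0" by (metis hom_zero injectivity inv_f_f injI)
  then have "map_poly \<phi> (map_poly (inv_into UNIV \<phi>) p) = p"
    using assms(2) unfolding poly_over_def by (intro poly_eqI) (auto simp: coeff_map_poly f_inv_into_f)
  then show ?thesis by metis
qed

lemma distinct_roots_if_pderiv_const:
  fixes rs :: "'c::field list"
  assumes "pderiv (Polynomial.smult c (\<Prod>r\<leftarrow>rs. [:- r, 1:])) = [:d:]" "d \<noteq> 0"
  shows "distinct rs"
proof (rule ccontr)
  assume "\<not> distinct rs"
  then obtain xs ys zs y where rs: "rs = xs @ [y] @ ys @ [y] @ zs" using not_distinct_decomp by blast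
  define L where "L = [:- y, 1::'c:]"
  have "(\<Prod>r\<leftarrow>rs. f r) = f y * f y * (\<Prod>r\<leftarrow>xs @ ys @ zs. f r)" for f :: "'c \<Rightarrow> 'c poly"
    unfolding rs by (simp add: mult_ac)
  then have "Polynomial.smult c (\<Prod>r\<leftarrow>rs. [:- r, 1:]) = L * L * Polynomial.smult c (\<Prod>r\<leftarrow>xs @ ys @ zs. [:- r, 1:])"
    unfolding L_def by (simp only: mult_smult_right)
  then obtain Q where "Polynomial.smult c (\<Prod>r\<leftarrow>rs. [:- r, 1:]) = L * L * Q" by blast
  then have "[:d:] = L * (L * pderiv Q + 2 * Q * pderiv L)"
    using assms(1) by (simp add: pderiv_mult algebra_simps)
  then have "L dvd [:d:]" by (metis dvd_triv_left)
  then show False using assms(2) dvd_imp_degree_le[of L "[:d:]"] by (simp add: L_def)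
qed

lemma card_roots_eq_degree_if_pderiv_const:
  fixes rs :: "'c::field list"
  assumes "c \<noteq> 0" "pderiv (Polynomial.smult c (\<Prod>r\<leftarrow>rs. [:- r, 1:])) = [:d:]" "d \<noteq> 0"
  shows "card {x. poly (Polynomial.smult c (\<Prod>r\<leftarrow>rs. [:- r, 1:])) x = 0}
    = degree (Polynomial.smult c (\<Prod>r\<leftarrow>rs. [:- r, 1:]))"
  using distinct_roots_if_pderiv_const[OF assms(2,3)] assms(1)
  using degree_linear_factors[of "\<lambda>r. - r" rs]
  by (simp add: poly_prod_list_zero_iff distinct_card)

lemma roots_irreducible_eq_roots_minpoly:
  assumes \<phi>: "field_hom \<phi>" and irr: "irreducible g" and m: "is_minpoly (range \<phi>) \<alpha> m"
    and "poly (map_poly \<phi> g) \<alpha> = 0"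
  shows "{\<beta>. poly (map_poly \<phi> g) \<beta> = 0} = {\<beta>. poly m \<beta> = 0}"
proof -
  interpret field_hom \<phi> by fact
  interpret map: map_poly_inj_idom_hom \<phi> ..
  have "poly_over (range \<phi>) (map_poly \<phi> g)" by (simp add: poly_over_def)
  then obtain h where h: "poly_over (range \<phi>) h" "map_poly \<phi> g = m * h"
    using m assms(4) unfolding is_minpoly_def by blast
  obtain m' h' where m': "m = map_poly \<phi> m'" and h': "h = map_poly \<phi> h'"
    using poly_over_range_imp_map_poly[OF \<phi>] h(1) m unfolding is_minpoly_def by metis
  have "g = m' * h'" using h(2) unfolding m' h' by (simp flip: map.hom_mult)
  moreover have "\<not> is_unit m'"
    using minpoly_degree_pos[OF m] unfolding m' by (simp add: is_unit_iff_degree)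
  ultimately have "is_unit h'" using irr by (auto dest: irreducibleD)
  then have "degree h = 0" "h \<noteq> 0" unfolding h' by (auto simp: is_unit_iff_degree)
  then obtain e where "h = [:e:]" "e \<noteq> 0" by (metis degree_eq_zeroE pCons_0_0)
  then show ?thesis using h(2) by simp
qed

lemma galois_group_eq_field_auts:
  "galois_group \<phi> f = field_auts (splitting_field_in \<phi> f) (range \<phi>)"
  unfolding galois_group_def field_auts_def Let_def by auto

text \<open>The roots of an irreducible factor \<open>g\<close> are those of the minimal polynomial of any one
  of them, hence form a single orbit of the Galois group.\<close>

lemma card_roots_dvd_card_galois_group:
  assumes emb: "field_embedding \<phi>" and split: "splits (map_poly \<phi> f)" and "f \<noteq> 0"
    and irr: "irreducible g" and "g dvd f"
  shows "card {x. poly (map_poly \<phi> g) x = 0} dvd card (galois_group \<phi> f)"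
proof -
  interpret \<phi>: field_hom \<phi> using emb by (rule field_embedding_imp_field_hom)
  interpret map: map_poly_inj_idom_hom \<phi> ..
  define k where "k = range \<phi>"
  have poly_over_k: "poly_over k (map_poly \<phi> p)" for p by (simp add: poly_over_def k_def)
  obtain c rs where F: "map_poly \<phi> f = Polynomial.smult c (\<Prod>r\<leftarrow>rs. [:- r, 1:])"
    using split unfolding splits_def by blast
  with \<open>f \<noteq> 0\<close> have "c \<noteq> 0" by auto
  interpret S: splitting_poly k "map_poly \<phi> f" c rs
    by (rule splitting_poly.intro[OF _ poly_over_k F \<open>c \<noteq> 0\<close>])
      (simp add: k_def subfield_range[OF \<phi>.field_hom_axioms])
  have K: "splitting_field_in \<phi> f = S.splitting_field"
    unfolding S.splitting_field_def S.roots_F[symmetric] unfolding splitting_field_in_def k_def ..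
  have g_dvd: "map_poly \<phi> g dvd Polynomial.smult c (\<Prod>r\<leftarrow>rs. [:- r, 1:])"
    using map.hom_dvd[OF \<open>g dvd f\<close>] by (simp only: F)
  have "degree (map_poly \<phi> g) > 0" using irr by (auto simp: irreducible_def is_unit_iff_degree)
  from root_of_dvd_linear_factors[OF g_dvd \<open>c \<noteq> 0\<close> this]
  obtain \<alpha> where \<alpha>: "\<alpha> \<in> set rs" "poly (map_poly \<phi> g) \<alpha> = 0" ..
  have "map_poly \<phi> g \<noteq> 0" using irr by (auto simp: irreducible_def)
  from S.k.minpoly_exists[OF poly_over_k this \<alpha>(2)] obtain m where m: "is_minpoly k \<alpha> m" .
  from S.card_roots_minpoly_dvd_card_field_auts[OF m \<alpha>(1)] show ?thesis
    unfolding galois_group_eq_field_auts K k_def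
      roots_irreducible_eq_roots_minpoly[OF \<phi>.field_hom_axioms irr m[unfolded k_def] \<alpha>(2)] .
qed

lemma degree_dvd_card_galois_group:
  assumes emb: "field_embedding \<phi>" and split: "splits (map_poly \<phi> (g * [:0, 1:]))"
    and irr: "irreducible g" and "pderiv (g * [:0, 1:]) = [:d:]" "d \<noteq> 0" and "poly g 0 \<noteq> 0"
  shows "degree g dvd card (galois_group \<phi> (g * [:0, 1:]))"
proof -
  interpret \<phi>: field_hom \<phi> using emb by (rule field_embedding_imp_field_hom)
  interpret map: map_poly_inj_idom_hom \<phi> ..
  let ?F = "map_poly \<phi> (g * [:0, 1:])" and ?R = "{x. poly (map_poly \<phi> g) x = 0}"
  have "g \<noteq> 0" using irr by (auto simp: irreducible_def)
  obtain c rs where F: "?F = Polynomial.smult c (\<Prod>r\<leftarrow>rs. [:- r, 1:])"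
    using split unfolding splits_def by blast
  with \<open>g \<noteq> 0\<close> have "c \<noteq> 0" by auto
  have "pderiv ?F = [:\<phi> d:]"
    unfolding \<phi>.map_poly_pderiv[symmetric] \<open>pderiv (g * [:0, 1:]) = [:d:]\<close> by (simp add: map_poly_const)
  then have "card {x. poly ?F x = 0} = degree ?F"
    unfolding F using card_roots_eq_degree_if_pderiv_const[OF \<open>c \<noteq> 0\<close>] \<open>d \<noteq> 0\<close> by simp
  moreover have "map_poly \<phi> [:0, 1:] = [:0, 1:]"
    by (rule poly_eqI) (simp add: coeff_map_poly coeff_pCons split: nat.splits)
  then have F_eq: "?F = map_poly \<phi> g * [:0, 1:]" by (simp only: map.hom_mult)
  then have "{x. poly ?F x = 0} = insert 0 ?R" by auto
  moreover have "0 \<notin> ?R" "finite ?R"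
    using \<open>poly g 0 \<noteq> 0\<close> \<open>g \<noteq> 0\<close> by (simp_all add: poly_0_coeff_0 coeff_map_poly poly_roots_finite)
  ultimately have "card ?R = degree g" using \<open>g \<noteq> 0\<close> unfolding F_eq by (simp add: degree_mult_eq)
  moreover have "g * [:0, 1:] \<noteq> 0" using \<open>g \<noteq> 0\<close> by simp
  ultimately show ?thesis using card_roots_dvd_card_galois_group[OF emb split _ irr dvd_triv_left] by simp
qed

theorem mainTheorem7:
  fixes a :: "nat \<Rightarrow> 'a::finite_field" and n :: nat
    and \<phi> :: "'a poly fract \<Rightarrow> 'c::field"
  assumes "n \<ge> 1" and "a n = 1"
  defines "q \<equiv> card (UNIV :: 'a set)"
  defines "f \<equiv> lift_Ft (q_poly q n a) + monom tvar 1"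
  assumes "field_embedding \<phi>" and "splits (map_poly \<phi> f)"
  shows "irreducible (f div [:0, 1:])
         \<and> (q ^ n - 1) dvd card (galois_group \<phi> f)"
proof -
  define g where "g = fract_poly (add_param (q_poly_shift q n a))"
  have "q \<ge> 2" unfolding q_def by (rule card_finite_field_ge_2)
  then have f: "f = g * [:0, 1:]" unfolding f_def g_def by (intro q_poly_add_t_eq) simp
  have "q ^ n \<ge> 2" using \<open>q \<ge> 2\<close> \<open>n \<ge> 1\<close> by (metis le_trans power_increasing power_one_right one_le_numeral)
  then have "degree (q_poly_shift q n a) = q ^ n - 1" "degree (q_poly_shift q n a) > 0"
    using degree_q_poly_shift[OF \<open>q \<ge> 2\<close>, of a n] \<open>a n = 1\<close> by simp_all
  then have deg: "degree g = q ^ n - 1" and irr: "irreducible g"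
    unfolding g_def by (simp_all add: degree_add_param irreducible_fract_poly_add_param)
  have "pderiv (g * [:0, 1:]) = [:to_fract [:a 0, 1:]:]"
    unfolding f[symmetric] f_def q_def by (rule pderiv_q_poly_add_t[OF of_nat_card_finite_field])
  moreover have "poly g 0 \<noteq> 0" unfolding g_def using poly_add_param_0 by (simp add: poly_0_coeff_0 coeff_map_poly)
  ultimately have "degree g dvd card (galois_group \<phi> f)"
    using degree_dvd_card_galois_group[OF \<open>field_embedding \<phi>\<close> _ irr] \<open>splits (map_poly \<phi> f)\<close> f by simp
  moreover have "f div [:0, 1:] = g" unfolding f by (rule nonzero_mult_div_cancel_right) simp
  ultimately show ?thesis using irr deg by simp
qed

end
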